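(* Let $T\in(0,\infty)$ and let $\big(\Omega,\mathscr{F},(\mathscr{F}_t)_{t\in[0,T]},\mathbf{P}\big)$ be a complete filtered probability space with $\mathscr{F}_T=\mathscr{F}$, whose filtration satisfies the usual conditions. Let $S$ be an adapted $d$-dimensional process with continuous paths and values in $(0,\infty)^d$. If $S$ is sticky, then for every stopping time $\tau\in[0,T]$ and every $\mathscr{F}_\tau$-measurable random variable $\eta\ge 0$, $$\mathbf{P}[S^\star_\tau<\eta\mid\mathscr{F}_\tau]>0\quad\text{almost surely on }\{\eta>0\},$$ i.e. $\mathbf{P}\big[\{\mathbf{P}[S^\star_\tau<\eta\mid\mathscr{F}_\tau]>0\}\cap\{\eta>0\}\big]=\mathbf{P}[\eta>0]$.
   Context: For $x\in\mathbb{R}^d$ let $\|x\|=\max(|x_1|,\ldots,|x_d|)$. For a stopping time $\tau\in[0,T]$ write $S^\star_\tau=\sup_{u\in[\tau,T]}\|S_u-S_\tau\|$. The process $S$ is called sticky if for every deterministic $t\in[0,T)$ and every $\delta>0$, $\mathbf{P}[S^\star_t<\delta\mid\mathscr{F}_t]>0$ almost surely. *)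

theory Defs
  imports "HOL-Probability.Probability"
begin

definition maxnorm :: "real ^ 'd \<Rightarrow> real" where
  "maxnorm x = Max (range (\<lambda>i. \<bar>x $ i\<bar>))"

definition filtered_prob_space_usual ::
    "'a measure \<Rightarrow> (real \<Rightarrow> 'a measure) \<Rightarrow> real \<Rightarrow> bool" where
  "filtered_prob_space_usual M F T \<longleftrightarrow>
     prob_space M \<and> complete_measure M \<and> 0 < T \<and>
     (\<forall>t\<in>{0..T}. subalgebra M (F t)) \<and>
     (\<forall>s\<in>{0..T}. \<forall>t\<in>{0..T}. s \<le> t \<longrightarrow> sets (F s) \<subseteq> sets (F t)) \<and>
     sets (F T) = sets M \<and>
     (\<forall>t\<in>{0..<T}. sets (F t) = (\<Inter>s\<in>{t<..T}. sets (F s))) \<and>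
     null_sets M \<subseteq> sets (F 0)"

definition stopping_time_on ::
    "'a measure \<Rightarrow> (real \<Rightarrow> 'a measure) \<Rightarrow> real \<Rightarrow> ('a \<Rightarrow> real) \<Rightarrow> bool" where
  "stopping_time_on M F T \<tau> \<longleftrightarrow>
     (\<forall>\<omega>\<in>space M. \<tau> \<omega> \<in> {0..T}) \<and>
     (\<forall>t\<in>{0..T}. {\<omega>\<in>space M. \<tau> \<omega> \<le> t} \<in> sets (F t))"

definition stopped_sigma ::
    "'a measure \<Rightarrow> (real \<Rightarrow> 'a measure) \<Rightarrow> real \<Rightarrow> ('a \<Rightarrow> real) \<Rightarrow> 'a measure" where
  "stopped_sigma M F T \<tau> =
     sigma (space M) {A \<in> sets M. \<forall>t\<in>{0..T}. {\<omega>\<in>A. \<tau> \<omega> \<le> t} \<in> sets (F t)}"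

definition condP :: "'a measure \<Rightarrow> 'a measure \<Rightarrow> 'a set \<Rightarrow> 'a \<Rightarrow> real" where
  "condP M G A = real_cond_exp M G (indicator A)"

definition Sstar :: "(real \<Rightarrow> 'a \<Rightarrow> real ^ 'd) \<Rightarrow> real \<Rightarrow> ('a \<Rightarrow> real) \<Rightarrow> 'a \<Rightarrow> real" where
  "Sstar S T \<tau> \<omega> = (SUP u\<in>{\<tau> \<omega>..T}. maxnorm (S u \<omega> - S (\<tau> \<omega>) \<omega>))"

definition adapted_cont_pos_process ::
    "'a measure \<Rightarrow> (real \<Rightarrow> 'a measure) \<Rightarrow> real \<Rightarrow> (real \<Rightarrow> 'a \<Rightarrow> real ^ 'd) \<Rightarrow> bool" where
  "adapted_cont_pos_process M F T S \<longleftrightarrow>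
     (\<forall>t\<in>{0..T}. S t \<in> borel_measurable (F t)) \<and>
     (\<forall>\<omega>\<in>space M. continuous_on {0..T} (\<lambda>t. S t \<omega>)) \<and>
     (\<forall>\<omega>\<in>space M. \<forall>t\<in>{0..T}. \<forall>i. 0 < S t \<omega> $ i)"

definition sticky ::
    "'a measure \<Rightarrow> (real \<Rightarrow> 'a measure) \<Rightarrow> real \<Rightarrow> (real \<Rightarrow> 'a \<Rightarrow> real ^ 'd) \<Rightarrow> bool" where
  "sticky M F T S \<longleftrightarrow>
     (\<forall>t\<in>{0..<T}. \<forall>\<delta>>0.
        AE \<omega> in M. condP M (F t) {\<omega>'\<in>space M. Sstar S T (\<lambda>_. t) \<omega>' < \<delta>} \<omega> > 0)"

end

theory Submission
  imports Defs
begin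

text \<open>
  Let \<open>B\<close> be the \<open>F\<^sub>\<tau>\<close>-event where \<open>\<eta> > 0\<close> but the conditional probability vanishes; then
  \<open>B \<inter> {S\<^sup>\<star>\<^sub>\<tau> < \<eta>}\<close> is null, and we show that \<open>B\<close> is null. By continuity of the paths, \<open>B\<close> is
  covered by countably many events \<open>W\<close> on which \<open>\<eta> > 3\<delta>\<close>, \<open>\<tau>\<close> lies in a window \<open>(t - h, t]\<close> with \<open>t\<close> a
  rational (or \<open>T\<close>), and \<open>S\<close> moves by less than \<open>\<delta>\<close> on \<open>[t - h, t]\<close>. Each \<open>W\<close> is
  \<open>F\<^sub>t\<close>-measurable, so stickiness at the deterministic time \<open>t\<close> makes \<open>W \<inter> {S\<^sup>\<star>\<^sub>t < \<delta>}\<close>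
  non-null whenever \<open>W\<close> is; and on this set the triangle inequality gives
  \<open>S\<^sup>\<star>\<^sub>\<tau> \<le> 2\<delta> + S\<^sup>\<star>\<^sub>t < 3\<delta> < \<eta>\<close>. Hence every \<open>W\<close>, and so \<open>B\<close>, is null.
\<close>

lemma maxnorm_eq_infnorm: "maxnorm = infnorm"
proof
  fix x :: "real ^ 'd"
  have "{\<bar>x $ i\<bar> |i. i \<in> UNIV} = range (\<lambda>i. \<bar>x $ i\<bar>)" by auto
  then show "maxnorm x = infnorm x"
    unfolding maxnorm_def infnorm_cart by (metis cSup_eq_Max finite finite_imageI range_eqI empty_iff)
qed

lemma borel_measurable_infnorm[measurable]: "infnorm \<in> borel_measurable borel"
  by (intro borel_measurable_continuous_onI continuous_intros)

lemma le_SUP_continuous_on: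
  fixes g :: "real \<Rightarrow> real"
  assumes "continuous_on {a..b} g" "X \<subseteq> {a..b}" "u \<in> X"
  shows "g u \<le> (SUP v\<in>X. g v)"
proof -
  have "bounded (g ` X)"
    using assms(1,2) by (meson bounded_subset compact_continuous_image compact_Icc compact_imp_bounded image_mono)
  then show ?thesis using assms(3) by (intro cSUP_upper bounded_imp_bdd_above)
qed

lemma SUP_continuous_on_eq_SUP_Rats:
  fixes g :: "real \<Rightarrow> real"
  assumes "a \<le> b" and cont: "continuous_on {a..b} g"
  shows "(SUP u\<in>{a..b}. g u) = (SUP q\<in>insert b \<rat>. if a \<le> q \<and> q \<le> b then g q else g a)"
    (is "_ = (SUP q\<in>_. ?h q)")
proof (rule antisym)
  have bdd: "bdd_above (?h ` insert b \<rat>)"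
    using \<open>a \<le> b\<close> le_SUP_continuous_on[OF cont order_refl]
    by (intro bdd_aboveI2[where M="SUP u\<in>{a..b}. g u"]) auto
  show "(SUP q\<in>insert b \<rat>. ?h q) \<le> (SUP u\<in>{a..b}. g u)"
    using \<open>a \<le> b\<close> le_SUP_continuous_on[OF cont order_refl] by (intro cSUP_least) auto
  show "(SUP u\<in>{a..b}. g u) \<le> (SUP q\<in>insert b \<rat>. ?h q)"
  proof (rule cSUP_least)
    show "{a..b} \<noteq> {}" using \<open>a \<le> b\<close> by auto
    fix u assume u: "u \<in> {a..b}"
    show "g u \<le> (SUP q\<in>insert b \<rat>. ?h q)"
    proof (cases "u = b")
      case True
      then show ?thesis using \<open>a \<le> b\<close> bdd by (intro cSUP_upper2[where x=b]) auto
    next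
      case False
      show ?thesis
      proof (rule field_le_epsilon)
        fix e :: real assume "0 < e"
        then obtain d where "0 < d" and d: "\<forall>v\<in>{a..b}. dist v u < d \<longrightarrow> dist (g v) (g u) < e"
          using cont u unfolding continuous_on_iff by blast
        obtain q where q: "q \<in> \<rat>" "u < q" "q < min b (u + d)"
          using Rats_dense_in_real[of u "min b (u + d)"] False u \<open>0 < d\<close> by auto
        then have "\<bar>g q - g u\<bar> < e" using d u by (auto simp: dist_real_def)
        then have "g u < ?h q + e" using q u by auto
        also have "?h q \<le> (SUP q\<in>insert b \<rat>. ?h q)" using bdd q by (intro cSUP_upper) auto
        finally show "g u \<le> (SUP q\<in>insert b \<rat>. ?h q) + e" by simp
      qed
    qed
  qed
qed

lemma borel_measurable_SUP_continuous_on: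
  fixes g :: "real \<Rightarrow> 'a \<Rightarrow> real"
  assumes "lo \<le> b"
    and range: "\<And>\<omega>. \<omega> \<in> space N \<Longrightarrow> lo \<le> a \<omega> \<and> a \<omega> \<le> b"
    and cont: "\<And>\<omega>. \<omega> \<in> space N \<Longrightarrow> continuous_on {a \<omega>..b} (\<lambda>u. g u \<omega>)"
    and g: "\<And>q. q \<in> {lo..b} \<Longrightarrow> g q \<in> borel_measurable N"
    and [measurable]: "a \<in> borel_measurable N" "(\<lambda>\<omega>. g (a \<omega>) \<omega>) \<in> borel_measurable N"
  shows "(\<lambda>\<omega>. SUP u\<in>{a \<omega>..b}. g u \<omega>) \<in> borel_measurable N"
proof -
  define h where "h q \<omega> = (if a \<omega> \<le> q \<and> q \<le> b then g (max lo (min b q)) \<omega> else g (a \<omega>) \<omega>)" for q \<omega>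
  have SUP_eq: "(SUP u\<in>{a \<omega>..b}. g u \<omega>) = (SUP q\<in>insert b \<rat>. h q \<omega>)" if "\<omega> \<in> space N" for \<omega>
    using SUP_continuous_on_eq_SUP_Rats[of "a \<omega>" b "\<lambda>u. g u \<omega>"] range[OF that] cont[OF that]
    unfolding h_def by (auto intro!: SUP_cong)
  have "h q \<in> borel_measurable N" for q
  proof -
    have [measurable]: "g (max lo (min b q)) \<in> borel_measurable N" using \<open>lo \<le> b\<close> by (intro g) auto
    show ?thesis unfolding h_def by measurable
  qed
  moreover have "bdd_above ((\<lambda>q. h q \<omega>) ` insert b \<rat>)" if "\<omega> \<in> space N" for \<omega>
    using range[OF that] le_SUP_continuous_on[OF cont[OF that]]
    by (intro bdd_aboveI2[where M="SUP u\<in>{a \<omega>..b}. g u \<omega>"]) (auto simp: h_def)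
  ultimately have "(\<lambda>\<omega>. SUP q\<in>insert b \<rat>. h q \<omega>) \<in> borel_measurable N"
    by (intro borel_measurable_cSUP) (simp_all add: countable_rat)
  then show ?thesis using SUP_eq by (subst measurable_cong) auto
qed

lemma borel_measurable_stopped_process:
  fixes X :: "real \<Rightarrow> 'a \<Rightarrow> 'b::metric_space"
  assumes "0 \<le> T"
    and X: "\<And>t. t \<in> {0..T} \<Longrightarrow> X t \<in> borel_measurable M"
    and cont: "\<And>\<omega>. \<omega> \<in> space M \<Longrightarrow> continuous_on {0..T} (\<lambda>t. X t \<omega>)"
    and [measurable]: "\<tau> \<in> borel_measurable M"
    and range: "\<And>\<omega>. \<omega> \<in> space M \<Longrightarrow> \<tau> \<omega> \<in> {0..T}"
  shows "(\<lambda>\<omega>. X (\<tau> \<omega>) \<omega>) \<in> borel_measurable M"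
proof (rule borel_measurable_LIMSEQ_metric)
  define grid where "grid n k = max 0 (min T (real_of_int k / real (Suc n)))" for n k
  show "(\<lambda>\<omega>. X (grid n \<lceil>\<tau> \<omega> * real (Suc n)\<rceil>) \<omega>) \<in> borel_measurable M" for n
  proof (rule measurable_compose_countable[where f="\<lambda>k. X (grid n k)"])
    show "X (grid n k) \<in> borel_measurable M" for k
      using \<open>0 \<le> T\<close> by (intro X) (auto simp: grid_def)
  qed measurable
  fix \<omega> assume \<omega>: "\<omega> \<in> space M"
  have bounds: "\<tau> \<omega> \<le> grid n \<lceil>\<tau> \<omega> * real (Suc n)\<rceil> \<and> grid n \<lceil>\<tau> \<omega> * real (Suc n)\<rceil> \<le> \<tau> \<omega> + 1 / real (Suc n)" for n
  proof -
    let ?c = "of_int \<lceil>\<tau> \<omega> * real (Suc n)\<rceil> / real (Suc n)"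
    have "\<tau> \<omega> * real (Suc n) \<le> of_int \<lceil>\<tau> \<omega> * real (Suc n)\<rceil>"
      and "of_int \<lceil>\<tau> \<omega> * real (Suc n)\<rceil> \<le> \<tau> \<omega> * real (Suc n) + 1"
      by linarith+
    then have "\<tau> \<omega> \<le> ?c" "?c \<le> (\<tau> \<omega> * real (Suc n) + 1) / real (Suc n)"
      by (intro mult_imp_le_div_pos divide_right_mono; simp only: of_nat_0_less_iff of_nat_0_le_iff zero_less_Suc)+
    moreover have "(\<tau> \<omega> * real (Suc n) + 1) / real (Suc n) = \<tau> \<omega> + 1 / real (Suc n)"
      by (simp add: add_divide_distrib)
    ultimately show ?thesis using range[OF \<omega>] by (auto simp: grid_def)
  qed
  have upper: "(\<lambda>n. \<tau> \<omega> + 1 / real (Suc n)) \<longlonglongrightarrow> \<tau> \<omega>"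
    using tendsto_add[OF tendsto_const LIMSEQ_Suc[OF lim_const_over_n], of "\<tau> \<omega>" 1] by simp
  have "(\<lambda>n. grid n \<lceil>\<tau> \<omega> * real (Suc n)\<rceil>) \<longlonglongrightarrow> \<tau> \<omega>"
    by (rule tendsto_sandwich[OF _ _ tendsto_const upper]) (use bounds in auto)
  moreover have "grid n k \<in> {0..T}" for n k
    using \<open>0 \<le> T\<close> by (auto simp: grid_def)
  ultimately show "(\<lambda>n. X (grid n \<lceil>\<tau> \<omega> * real (Suc n)\<rceil>) \<omega>) \<longlonglongrightarrow> X (\<tau> \<omega>) \<omega>"
    by (intro continuous_on_tendsto_compose[OF cont[OF \<omega>] _ range[OF \<omega>]]) auto
qed

lemma borel_measurable_Sstar:
  assumes "0 \<le> T"
    and S: "\<And>t. t \<in> {0..T} \<Longrightarrow> S t \<in> borel_measurable M"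
    and cont: "\<And>\<omega>. \<omega> \<in> space M \<Longrightarrow> continuous_on {0..T} (\<lambda>t. S t \<omega>)"
    and [measurable]: "\<tau> \<in> borel_measurable M"
    and range: "\<And>\<omega>. \<omega> \<in> space M \<Longrightarrow> \<tau> \<omega> \<in> {0..T}"
  shows "Sstar S T \<tau> \<in> borel_measurable M"
  unfolding Sstar_def maxnorm_eq_infnorm
proof (rule borel_measurable_SUP_continuous_on[where lo=0])
  have [measurable]: "(\<lambda>\<omega>. S (\<tau> \<omega>) \<omega>) \<in> borel_measurable M"
    by (rule borel_measurable_stopped_process[OF \<open>0 \<le> T\<close> S cont]) (use range in auto)
  show "(\<lambda>\<omega>. infnorm (S q \<omega> - S (\<tau> \<omega>) \<omega>)) \<in> borel_measurable M" if "q \<in> {0..T}" for q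
    using S[OF that] by measurable
  show "(\<lambda>\<omega>. infnorm (S (\<tau> \<omega>) \<omega> - S (\<tau> \<omega>) \<omega>)) \<in> borel_measurable M"
    by simp
  show "continuous_on {\<tau> \<omega>..T} (\<lambda>u. infnorm (S u \<omega> - S (\<tau> \<omega>) \<omega>))" if "\<omega> \<in> space M" for \<omega>
    using range[OF that] continuous_on_subset[OF cont[OF that]]
    by (intro continuous_intros) auto
qed (use \<open>0 \<le> T\<close> range in auto)

definition left_oscillation :: "(real \<Rightarrow> 'a \<Rightarrow> real ^ 'd) \<Rightarrow> real \<Rightarrow> real \<Rightarrow> 'a \<Rightarrow> real" where
  "left_oscillation S a t \<omega> = (SUP u\<in>{a..t}. maxnorm (S u \<omega> - S t \<omega>))"

lemma Sstar_le_left_oscillation: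
  assumes cont: "continuous_on {0..T} (\<lambda>u. S u \<omega>)"
    and "0 \<le> a" "a \<le> \<tau> \<omega>" "\<tau> \<omega> \<le> t" "t \<le> T"
  shows "Sstar S T \<tau> \<omega> \<le> 2 * left_oscillation S a t \<omega> + Sstar S T (\<lambda>_. t) \<omega>"
proof -
  let ?g = "\<lambda>u. infnorm (S u \<omega> - S t \<omega>)"
  have g_cont: "continuous_on {0..T} ?g"
    using cont by (intro continuous_intros)
  have left: "?g u \<le> left_oscillation S a t \<omega>" if "u \<in> {a..t}" for u
    unfolding left_oscillation_def maxnorm_eq_infnorm
    using that assms by (intro le_SUP_continuous_on[OF g_cont]) auto
  have right: "?g u \<le> Sstar S T (\<lambda>_. t) \<omega>" if "u \<in> {t..T}" for u
    unfolding Sstar_def maxnorm_eq_infnorm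
    using that assms by (intro le_SUP_continuous_on[OF g_cont]) auto
  have "0 \<le> left_oscillation S a t \<omega>" "0 \<le> Sstar S T (\<lambda>_. t) \<omega>"
    using left[of t] right[of t] assms by (auto simp: infnorm_0)
  have "infnorm (S u \<omega> - S (\<tau> \<omega>) \<omega>) \<le> 2 * left_oscillation S a t \<omega> + Sstar S T (\<lambda>_. t) \<omega>"
    if "u \<in> {\<tau> \<omega>..T}" for u
  proof -
    have "infnorm (S u \<omega> - S (\<tau> \<omega>) \<omega>) \<le> ?g u + ?g (\<tau> \<omega>)"
      using infnorm_triangle[of "S u \<omega> - S t \<omega>" "S t \<omega> - S (\<tau> \<omega>) \<omega>"]
      by (simp add: infnorm_sub[of "S t \<omega>"])
    moreover have "?g (\<tau> \<omega>) \<le> left_oscillation S a t \<omega>"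
      using assms by (intro left) auto
    moreover have "?g u \<le> left_oscillation S a t \<omega> + Sstar S T (\<lambda>_. t) \<omega>"
      using left[of u] right[of u] that \<open>0 \<le> left_oscillation S a t \<omega>\<close> \<open>0 \<le> Sstar S T (\<lambda>_. t) \<omega>\<close> assms
      by (cases "u \<le> t") auto
    ultimately show ?thesis by linarith
  qed
  then show ?thesis
    unfolding Sstar_def[of S T \<tau>] maxnorm_eq_infnorm using assms by (intro cSUP_least) auto
qed

lemma left_oscillation_small:
  assumes cont: "continuous_on {0..T} (\<lambda>u. S u \<omega>)" and "0 < \<epsilon>"
  obtains d where "0 < d"
    and "\<And>a t. 0 \<le> a \<Longrightarrow> a \<le> t \<Longrightarrow> t \<le> T \<Longrightarrow> t - a < d \<Longrightarrow> left_oscillation S a t \<omega> < \<epsilon>"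
proof -
  obtain d where "0 < d" and d: "\<forall>u\<in>{0..T}. \<forall>v\<in>{0..T}. dist u v < d \<longrightarrow> dist (S u \<omega>) (S v \<omega>) < \<epsilon> / 2"
    using compact_uniformly_continuous[OF cont compact_Icc] \<open>0 < \<epsilon>\<close>
    unfolding uniformly_continuous_on_def by (meson half_gt_zero)
  have "left_oscillation S a t \<omega> < \<epsilon>" if "0 \<le> a" "a \<le> t" "t \<le> T" "t - a < d" for a t
  proof -
    have "infnorm (S u \<omega> - S t \<omega>) \<le> \<epsilon> / 2" if "u \<in> {a..t}" for u
    proof -
      have "dist (S u \<omega>) (S t \<omega>) < \<epsilon> / 2"
        using d that \<open>0 \<le> a\<close> \<open>t \<le> T\<close> \<open>t - a < d\<close> by (auto simp: dist_real_def)
      then show ?thesis using infnorm_le_norm[of "S u \<omega> - S t \<omega>"] by (simp add: dist_norm)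
    qed
    then have "left_oscillation S a t \<omega> \<le> \<epsilon> / 2"
      unfolding left_oscillation_def maxnorm_eq_infnorm using \<open>a \<le> t\<close> by (intro cSUP_least) auto
    then show ?thesis using \<open>0 < \<epsilon>\<close> by linarith
  qed
  with \<open>0 < d\<close> show ?thesis by (rule that)
qed

lemma sigma_finite_subalgebra_of_finite:
  assumes "finite_measure M" "subalgebra M G"
  shows "sigma_finite_subalgebra M G"
  using assms by (intro finite_measure_subalgebra_is_sigma_finite)
    (simp add: finite_measure_subalgebra_def finite_measure_subalgebra_axioms_def)

lemma set_integral_condP:
  assumes "finite_measure M" "subalgebra M G" "E \<in> sets M" "A \<in> sets G"
  shows "(\<integral>x\<in>A. condP M G E x \<partial>M) = measure M (A \<inter> E)"
proof -
  interpret finite_measure M by fact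
  interpret sigma_finite_subalgebra M G
    using assms(1,2) by (rule sigma_finite_subalgebra_of_finite)
  have A: "A \<in> sets M" using assms(2,4) by (auto simp: subalgebra_def)
  have "(\<integral>x\<in>A. condP M G E x \<partial>M) = (\<integral>x\<in>A. indicator E x \<partial>M)"
    unfolding condP_def using assms(3,4)
    by (intro real_cond_exp_intA[symmetric] integrable_real_indicator) (auto simp: less_top[symmetric])
  also have "\<dots> = (\<integral>x. indicator (A \<inter> E) x \<partial>M)"
    unfolding set_lebesgue_integral_def by (intro Bochner_Integration.integral_cong) (auto simp: indicator_def)
  also have "\<dots> = measure M (A \<inter> E)"
    using A assms(3) by simp
  finally show ?thesis .
qed

lemma condP_pos_imp_Int_not_null:
  assumes "finite_measure M" "subalgebra M G" "E \<in> sets M"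
    and pos: "AE x in M. 0 < condP M G E x"
    and A: "A \<in> sets G" "A \<notin> null_sets M"
  shows "A \<inter> E \<notin> null_sets M"
proof
  interpret finite_measure M by fact
  interpret sigma_finite_subalgebra M G
    using assms(1,2) by (rule sigma_finite_subalgebra_of_finite)
  assume "A \<inter> E \<in> null_sets M"
  then have "(\<integral>x. indicator A x * condP M G E x \<partial>M) = 0"
    using set_integral_condP[OF assms(1-3) A(1)] by (simp add: set_lebesgue_integral_def measure_eq_0_null_sets)
  moreover have "integrable M (condP M G E)"
    unfolding condP_def using assms(3)
    by (intro real_cond_exp_int integrable_real_indicator) (auto simp: less_top[symmetric])
  then have "integrable M (\<lambda>x. indicator A x * condP M G E x)"
    using integrable_mult_indicator[of A M "condP M G E"] A(1) assms(2) by (auto simp: subalgebra_def)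
  ultimately have "AE x in M. indicator A x * condP M G E x = 0"
    using pos by (subst integral_nonneg_eq_0_iff_AE[symmetric]) (auto elim!: eventually_mono)
  then have "AE x in M. x \<notin> A"
    using pos by eventually_elim (auto simp: indicator_def)
  then show False
    using A assms(2) AE_iff_null_sets[of A M] by (auto simp: subalgebra_def)
qed

lemma condP_nonpos_imp_Int_null:
  assumes "finite_measure M" "subalgebra M G" "E \<in> sets M"
    and A: "A \<in> sets G" "\<And>x. x \<in> A \<Longrightarrow> condP M G E x \<le> 0"
  shows "A \<inter> E \<in> null_sets M"
proof -
  interpret finite_measure M by fact
  have "measure M (A \<inter> E) = (\<integral>x. indicator A x * condP M G E x \<partial>M)"
    using set_integral_condP[OF assms(1-3) A(1)] by (simp add: set_lebesgue_integral_def)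
  also have "\<dots> \<le> (\<integral>x. 0 \<partial>M)"
    using A(2) by (intro integral_mono') (auto simp: indicator_def)
  also have "\<dots> = 0" by simp
  finally have "measure M (A \<inter> E) = 0" using measure_nonneg[of M "A \<inter> E"] by linarith
  moreover have "A \<inter> E \<in> sets M" using A(1) assms(2,3) by (auto simp: subalgebra_def)
  ultimately show ?thesis by (simp add: emeasure_eq_measure null_sets_def)
qed

text \<open>The clamp \<open>max 0\<close> keeps the window inside \<open>[0, T]\<close>, where the paths are continuous.\<close>

definition stopping_window ::
    "('a \<Rightarrow> real) \<Rightarrow> (real \<Rightarrow> 'a \<Rightarrow> real ^ 'd) \<Rightarrow> 'a set \<Rightarrow> real \<Rightarrow> real \<Rightarrow> real \<Rightarrow> 'a set" where
  "stopping_window \<tau> S A t h \<delta> =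
     {\<omega>\<in>A. t - h < \<tau> \<omega> \<and> \<tau> \<omega> \<le> t \<and> left_oscillation S (max 0 (t - h)) t \<omega> < \<delta>}"

locale usual_filtered_process =
  fixes M :: "'a measure" and F :: "real \<Rightarrow> 'a measure" and T :: real
    and S :: "real \<Rightarrow> 'a \<Rightarrow> real ^ 'd"
  assumes usual: "filtered_prob_space_usual M F T"
    and process: "adapted_cont_pos_process M F T S"
begin

sublocale prob_space M
  using usual by (simp add: filtered_prob_space_usual_def)

lemma T_pos: "0 < T"
  using usual by (simp add: filtered_prob_space_usual_def)

lemma subalgebra_F: "t \<in> {0..T} \<Longrightarrow> subalgebra M (F t)"
  using usual by (simp add: filtered_prob_space_usual_def)

lemma space_F: "t \<in> {0..T} \<Longrightarrow> space (F t) = space M"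
  using subalgebra_F by (simp add: subalgebra_def)

lemma sets_F_mono: "s \<in> {0..T} \<Longrightarrow> t \<in> {0..T} \<Longrightarrow> s \<le> t \<Longrightarrow> sets (F s) \<subseteq> sets (F t)"
  using usual by (simp add: filtered_prob_space_usual_def)

lemma continuous_path: "\<omega> \<in> space M \<Longrightarrow> continuous_on {0..T} (\<lambda>t. S t \<omega>)"
  using process by (simp add: adapted_cont_pos_process_def)

lemma adapted:
  assumes "q \<in> {0..T}" "t \<in> {0..T}" "q \<le> t"
  shows "S q \<in> borel_measurable (F t)"
proof (rule measurable_from_subalg)
  show "S q \<in> borel_measurable (F q)"
    using process assms(1) by (simp add: adapted_cont_pos_process_def)
  show "subalgebra (F t) (F q)"
    using subalgebra_F[OF assms(1)] subalgebra_F[OF assms(2)] sets_F_mono[OF assms]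
    by (simp add: subalgebra_def)
qed

lemma borel_measurable_S: "t \<in> {0..T} \<Longrightarrow> S t \<in> borel_measurable M"
  using T_pos by (intro measurable_from_subalg[OF subalgebra_F[of T] adapted]) auto

lemma borel_measurable_left_oscillation:
  assumes "0 \<le> a" "a \<le> t" "t \<le> T"
  shows "left_oscillation S a t \<in> borel_measurable (F t)"
  unfolding left_oscillation_def[abs_def] maxnorm_eq_infnorm
proof (rule borel_measurable_SUP_continuous_on[where lo=a])
  have S_F: "S q \<in> borel_measurable (F t)" if "q \<in> {a..t}" for q
    using that assms by (intro adapted) auto
  have [measurable]: "S a \<in> borel_measurable (F t)" "S t \<in> borel_measurable (F t)"
    using S_F assms by auto
  show "(\<lambda>\<omega>. infnorm (S q \<omega> - S t \<omega>)) \<in> borel_measurable (F t)" if "q \<in> {a..t}" for q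
  proof -
    have [measurable]: "S q \<in> borel_measurable (F t)" using S_F that .
    show ?thesis by measurable
  qed
  show "(\<lambda>\<omega>. infnorm (S a \<omega> - S t \<omega>)) \<in> borel_measurable (F t)"
    by measurable
  show "continuous_on {a..t} (\<lambda>u. infnorm (S u \<omega> - S t \<omega>))" if "\<omega> \<in> space (F t)" for \<omega>
    using that assms space_F[of t] continuous_on_subset[OF continuous_path[of \<omega>]]
    by (intro continuous_intros) auto
qed (use assms in auto)

lemma borel_measurable_Sstar_at: "t \<in> {0..T} \<Longrightarrow> Sstar S T (\<lambda>_. t) \<in> borel_measurable M"
  using T_pos by (intro borel_measurable_Sstar borel_measurable_S continuous_path) auto

lemma sticky_Int_not_null:
  assumes "sticky M F T S" "t \<in> {0..T}" "0 < \<delta>" "B \<in> sets (F t)" "B \<notin> null_sets M"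
  shows "B \<inter> {\<omega>\<in>space M. Sstar S T (\<lambda>_. t) \<omega> < \<delta>} \<notin> null_sets M"
proof (cases "t < T")
  case True
  have [measurable]: "Sstar S T (\<lambda>_. t) \<in> borel_measurable M"
    using assms(2) by (rule borel_measurable_Sstar_at)
  have "t \<in> {0..<T}" using assms(2) True by simp
  then have "AE \<omega> in M. 0 < condP M (F t) {\<omega>\<in>space M. Sstar S T (\<lambda>_. t) \<omega> < \<delta>} \<omega>"
    using assms(1,3) unfolding sticky_def by blast
  from condP_pos_imp_Int_not_null[OF finite_measure_axioms subalgebra_F[OF assms(2)] _ this assms(4,5)]
  show ?thesis by measurable
next
  case False
  then have "Sstar S T (\<lambda>_. t) \<omega> = 0" for \<omega>
    using assms(2) by (simp add: Sstar_def maxnorm_eq_infnorm infnorm_0)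
  then show ?thesis
    using assms sets.sets_into_space subalgebra_F[OF assms(2)] by (auto simp: subalgebra_def Int_absorb2)
qed


context
  fixes \<tau> :: "'a \<Rightarrow> real"
  assumes stopping: "stopping_time_on M F T \<tau>"
begin

lemma stopping_time_range: "\<omega> \<in> space M \<Longrightarrow> \<tau> \<omega> \<in> {0..T}"
  using stopping by (simp add: stopping_time_on_def)

lemma stopping_time_le_sets:
  assumes "t \<in> {0..T}" "s \<le> t"
  shows "{\<omega>\<in>space M. \<tau> \<omega> \<le> s} \<in> sets (F t)"
proof (cases "0 \<le> s")
  case True
  then have "{\<omega>\<in>space M. \<tau> \<omega> \<le> s} \<in> sets (F s)"
    using stopping assms by (simp add: stopping_time_on_def)
  then show ?thesis using sets_F_mono[of s t] True assms by auto
next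
  case False
  then have "{\<omega>\<in>space M. \<tau> \<omega> \<le> s} = {}"
    using stopping_time_range by force
  then show ?thesis by (metis sets.empty_sets)
qed

lemma borel_measurable_stopping_time: "\<tau> \<in> borel_measurable M"
  unfolding borel_measurable_iff_le
proof
  fix s
  show "{\<omega>\<in>space M. \<tau> \<omega> \<le> s} \<in> sets M"
  proof (cases "s \<le> T")
    case True
    then show ?thesis
      using stopping_time_le_sets[of T s] subalgebra_F[of T] T_pos by (auto simp: subalgebra_def)
  next
    case False
    then have "{\<omega>\<in>space M. \<tau> \<omega> \<le> s} = space M"
      using stopping_time_range by force
    then show ?thesis by simp
  qed
qed

lemma
  shows sets_stopped_sigma:
      "sets (stopped_sigma M F T \<tau>) = {A\<in>sets M. \<forall>t\<in>{0..T}. {\<omega>\<in>A. \<tau> \<omega> \<le> t} \<in> sets (F t)}"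
    and space_stopped_sigma: "space (stopped_sigma M F T \<tau>) = space M"
proof -
  define C where "C = {A\<in>sets M. \<forall>t\<in>{0..T}. {\<omega>\<in>A. \<tau> \<omega> \<le> t} \<in> sets (F t)}"
  have C: "C \<subseteq> Pow (space M)"
    using sets.sets_into_space by (auto simp: C_def)
  have "sigma_algebra (space M) C"
    unfolding sigma_algebra_iff2
  proof (intro conjI ballI allI impI C)
    show "{} \<in> C" by (simp add: C_def)
  next
    fix A assume A: "A \<in> C"
    have "{\<omega>\<in>space M - A. \<tau> \<omega> \<le> t} = {\<omega>\<in>space M. \<tau> \<omega> \<le> t} - {\<omega>\<in>A. \<tau> \<omega> \<le> t}" for t
      by auto
    then show "space M - A \<in> C"
      using A stopping_time_le_sets by (auto simp: C_def)
  next
    fix A :: "nat \<Rightarrow> 'a set" assume A: "range A \<subseteq> C"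
    have "{\<omega>\<in>(\<Union>i. A i). \<tau> \<omega> \<le> t} = (\<Union>i. {\<omega>\<in>A i. \<tau> \<omega> \<le> t})" for t
      by auto
    then show "(\<Union>i. A i) \<in> C"
      using A by (auto simp: C_def intro!: sets.countable_UN)
  qed
  then show "sets (stopped_sigma M F T \<tau>) = C" "space (stopped_sigma M F T \<tau>) = space M"
    unfolding stopped_sigma_def C_def[symmetric]
    by (simp_all add: C sigma_algebra.sigma_sets_eq)
qed

lemma subalgebra_stopped_sigma: "subalgebra M (stopped_sigma M F T \<tau>)"
  by (auto simp: subalgebra_def sets_stopped_sigma space_stopped_sigma)


lemma grid_time_approximation:
  assumes "\<omega> \<in> space M" "0 < \<epsilon>"
  obtains n t where "t \<in> insert T (\<rat> \<inter> {0..T})" "t - 1 / real (Suc n) < \<tau> \<omega>" "\<tau> \<omega> \<le> t"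
    "left_oscillation S (max 0 (t - 1 / real (Suc n))) t \<omega> < \<epsilon>"
proof -
  obtain d where "0 < d"
    and d: "\<And>a t. 0 \<le> a \<Longrightarrow> a \<le> t \<Longrightarrow> t \<le> T \<Longrightarrow> t - a < d \<Longrightarrow> left_oscillation S a t \<omega> < \<epsilon>"
    using left_oscillation_small[where S=S, OF continuous_path[OF assms(1)] assms(2)] by blast
  obtain n where n: "1 / real (Suc n) < d"
    using reals_Archimedean[OF \<open>0 < d\<close>] by (auto simp: inverse_eq_divide)
  have \<tau>: "\<tau> \<omega> \<in> {0..T}" using stopping_time_range[OF assms(1)] .
  obtain t where t: "t \<in> insert T (\<rat> \<inter> {0..T})" "\<tau> \<omega> \<le> t" "t < \<tau> \<omega> + 1 / real (Suc n)"
  proof (cases "\<tau> \<omega> = T")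
    case True
    then show ?thesis by (intro that[of T]) auto
  next
    case False
    then obtain q where "q \<in> \<rat>" "\<tau> \<omega> < q" "q < min T (\<tau> \<omega> + 1 / real (Suc n))"
      using Rats_dense_in_real[of "\<tau> \<omega>" "min T (\<tau> \<omega> + 1 / real (Suc n))"] \<tau> by auto
    then show ?thesis using \<tau> by (intro that[of q]) auto
  qed
  moreover have "left_oscillation S (max 0 (t - 1 / real (Suc n))) t \<omega> < \<epsilon>"
    using t \<tau> n by (intro d) auto
  moreover have "t - 1 / real (Suc n) < \<tau> \<omega>"
    using t(3) by simp
  ultimately show ?thesis by (intro that[of t n]) simp_all
qed

lemma borel_measurable_Sstar_stopped: "Sstar S T \<tau> \<in> borel_measurable M"
  using T_pos stopping_time_range
  by (intro borel_measurable_Sstar borel_measurable_S continuous_path borel_measurable_stopping_time) auto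

lemma sets_stopping_window:
  assumes "A \<in> sets (stopped_sigma M F T \<tau>)" "t \<in> {0..T}" "0 < h"
  shows "stopping_window \<tau> S A t h \<delta> \<in> sets (F t)"
proof -
  have "{\<omega>\<in>A. \<tau> \<omega> \<le> t} \<in> sets (F t)"
    using assms by (simp add: sets_stopped_sigma)
  moreover have "{\<omega>\<in>space M. \<tau> \<omega> \<le> t - h} \<in> sets (F t)"
    using assms by (intro stopping_time_le_sets) auto
  moreover have [measurable]: "left_oscillation S (max 0 (t - h)) t \<in> borel_measurable (F t)"
    using assms by (intro borel_measurable_left_oscillation) auto
  then have "{\<omega>\<in>space (F t). left_oscillation S (max 0 (t - h)) t \<omega> < \<delta>} \<in> sets (F t)"
    by measurable
  moreover have "stopping_window \<tau> S A t h \<delta> = ({\<omega>\<in>A. \<tau> \<omega> \<le> t} - {\<omega>\<in>space M. \<tau> \<omega> \<le> t - h}) \<inter>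
      {\<omega>\<in>space (F t). left_oscillation S (max 0 (t - h)) t \<omega> < \<delta>}"
    using assms(1) sets.sets_into_space space_F[OF assms(2)]
    by (auto simp: stopping_window_def sets_stopped_sigma)
  ultimately show ?thesis
    by auto
qed

lemma stopping_window_Int_not_null:
  assumes sticky: "sticky M F T S"
    and A: "A \<in> sets (stopped_sigma M F T \<tau>)" and t: "t \<in> {0..T}" and "0 < h" "0 < \<delta>"
    and not_null: "stopping_window \<tau> S A t h \<delta> \<notin> null_sets M"
  shows "stopping_window \<tau> S A t h \<delta> \<inter> {\<omega>\<in>space M. Sstar S T \<tau> \<omega> < 3 * \<delta>} \<notin> null_sets M"
proof
  let ?W = "stopping_window \<tau> S A t h \<delta>"
  assume null: "?W \<inter> {\<omega>\<in>space M. Sstar S T \<tau> \<omega> < 3 * \<delta>} \<in> null_sets M"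
  have W_F: "?W \<in> sets (F t)"
    using A t \<open>0 < h\<close> by (rule sets_stopping_window)
  then have "?W \<inter> {\<omega>\<in>space M. Sstar S T (\<lambda>_. t) \<omega> < \<delta>} \<notin> null_sets M"
    using sticky_Int_not_null[OF sticky t \<open>0 < \<delta>\<close> _ not_null] by blast
  moreover have "?W \<inter> {\<omega>\<in>space M. Sstar S T (\<lambda>_. t) \<omega> < \<delta>} \<subseteq>
      ?W \<inter> {\<omega>\<in>space M. Sstar S T \<tau> \<omega> < 3 * \<delta>}"
  proof safe
    fix \<omega> assume \<omega>: "\<omega> \<in> ?W" "\<omega> \<in> space M" "Sstar S T (\<lambda>_. t) \<omega> < \<delta>"
    then have "Sstar S T \<tau> \<omega> \<le> 2 * left_oscillation S (max 0 (t - h)) t \<omega> + Sstar S T (\<lambda>_. t) \<omega>"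
      using stopping_time_range[of \<omega>] t
      by (intro Sstar_le_left_oscillation[OF continuous_path]) (auto simp: stopping_window_def)
    with \<omega> show "Sstar S T \<tau> \<omega> < 3 * \<delta>"
      by (auto simp: stopping_window_def)
  qed
  moreover have [measurable]: "Sstar S T (\<lambda>_. t) \<in> borel_measurable M"
    using t by (rule borel_measurable_Sstar_at)
  have "?W \<in> sets M"
    using W_F subalgebra_F[OF t] by (auto simp: subalgebra_def)
  then have "?W \<inter> {\<omega>\<in>space M. Sstar S T (\<lambda>_. t) \<omega> < \<delta>} \<in> sets M"
    by measurable
  ultimately show False
    using null_sets_subset[OF null] by blast
qed

lemma stopped_sticky_not_null:
  assumes sticky: "sticky M F T S"
    and \<eta> [measurable]: "\<eta> \<in> borel_measurable (stopped_sigma M F T \<tau>)"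
    and A: "A \<in> sets (stopped_sigma M F T \<tau>)" "\<And>\<omega>. \<omega> \<in> A \<Longrightarrow> 0 < \<eta> \<omega>" "A \<notin> null_sets M"
  shows "A \<inter> {\<omega>\<in>space M. Sstar S T \<tau> \<omega> < \<eta> \<omega>} \<notin> null_sets M"
proof
  assume null: "A \<inter> {\<omega>\<in>space M. Sstar S T \<tau> \<omega> < \<eta> \<omega>} \<in> null_sets M"
  \<comment> \<open>rational window endpoints keep the cover countable\<close>
  define Q where "Q = insert T (\<rat> \<inter> {0..T})"
  define \<delta> where "\<delta> m = 1 / real (Suc m)" for m :: nat
  define A' where "A' m = A \<inter> {\<omega>\<in>space M. 3 * \<delta> m < \<eta> \<omega>}" for m
  define W where "W m n t = stopping_window \<tau> S (A' m) t (1 / real (Suc n)) (\<delta> m)" for m n t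
  have A_M: "A \<in> sets M" using A(1) by (simp add: sets_stopped_sigma)
  have "A \<subseteq> (\<Union>(m, n, t)\<in>UNIV \<times> UNIV \<times> Q. W m n t)"
  proof
    fix \<omega> assume "\<omega> \<in> A"
    then have "\<omega> \<in> space M" "0 < \<eta> \<omega> / 3" using A_M sets.sets_into_space A(2) by auto
    then obtain m where "inverse (real (Suc m)) < \<eta> \<omega> / 3"
      using reals_Archimedean by blast
    then have "3 * \<delta> m < \<eta> \<omega>" by (simp add: \<delta>_def inverse_eq_divide)
    moreover have "0 < \<delta> m" by (simp add: \<delta>_def)
    then obtain n t where "t \<in> Q" "t - 1 / real (Suc n) < \<tau> \<omega>" "\<tau> \<omega> \<le> t"
      "left_oscillation S (max 0 (t - 1 / real (Suc n))) t \<omega> < \<delta> m"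
      using grid_time_approximation[OF \<open>\<omega> \<in> space M\<close>] unfolding Q_def by blast
    ultimately show "\<omega> \<in> (\<Union>(m, n, t)\<in>UNIV \<times> UNIV \<times> Q. W m n t)"
      using \<open>\<omega> \<in> A\<close> \<open>\<omega> \<in> space M\<close> by (auto simp: W_def A'_def stopping_window_def)
  qed
  moreover have "W m n t \<in> null_sets M" if "t \<in> Q" for m n t
  proof (rule ccontr)
    assume not_null: "W m n t \<notin> null_sets M"
    have t: "t \<in> {0..T}" using that T_pos by (auto simp: Q_def)
    have "{\<omega>\<in>space (stopped_sigma M F T \<tau>). 3 * \<delta> m < \<eta> \<omega>} \<in> sets (stopped_sigma M F T \<tau>)"
      by measurable
    then have A': "A' m \<in> sets (stopped_sigma M F T \<tau>)"
      using A(1) by (auto simp: A'_def space_stopped_sigma)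
    have "W m n t \<inter> {\<omega>\<in>space M. Sstar S T \<tau> \<omega> < 3 * \<delta> m} \<notin> null_sets M"
      using not_null unfolding W_def by (intro stopping_window_Int_not_null[OF sticky A' t]) (auto simp: \<delta>_def)
    moreover have "W m n t \<inter> {\<omega>\<in>space M. Sstar S T \<tau> \<omega> < 3 * \<delta> m} \<subseteq>
        A \<inter> {\<omega>\<in>space M. Sstar S T \<tau> \<omega> < \<eta> \<omega>}"
      by (auto simp: W_def A'_def stopping_window_def)
    moreover have [measurable]: "Sstar S T \<tau> \<in> borel_measurable M"
      by (rule borel_measurable_Sstar_stopped)
    have "W m n t \<in> sets M"
      using sets_stopping_window[OF A' t] subalgebra_F[OF t] by (auto simp: W_def subalgebra_def)
    then have "W m n t \<inter> {\<omega>\<in>space M. Sstar S T \<tau> \<omega> < 3 * \<delta> m} \<in> sets M"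
      by measurable
    ultimately show False
      using null_sets_subset[OF null] by blast
  qed
  then have "(\<Union>(m, n, t)\<in>UNIV \<times> UNIV \<times> Q. W m n t) \<in> null_sets M"
    by (intro null_sets_UN') (auto simp: Q_def countable_rat)
  ultimately show False
    using A(3) A_M null_sets_subset by blast
qed

end

end

theorem lemma1:
  fixes M :: "'a measure" and F :: "real \<Rightarrow> 'a measure" and T :: real
    and S :: "real \<Rightarrow> 'a \<Rightarrow> real ^ 'd"
    and \<tau> :: "'a \<Rightarrow> real" and \<eta> :: "'a \<Rightarrow> real"
  assumes "filtered_prob_space_usual M F T"
    and "adapted_cont_pos_process M F T S"
    and "sticky M F T S"
    and "stopping_time_on M F T \<tau>"
    and "\<eta> \<in> borel_measurable (stopped_sigma M F T \<tau>)"
    and "\<forall>\<omega>\<in>space M. 0 \<le> \<eta> \<omega>"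
  shows "AE \<omega> in M. 0 < \<eta> \<omega> \<longrightarrow>
           0 < condP M (stopped_sigma M F T \<tau>)
                 {\<omega>'\<in>space M. Sstar S T \<tau> \<omega>' < \<eta> \<omega>'} \<omega>"
proof -
  interpret usual_filtered_process M F T S
    using assms(1,2) by unfold_locales
  let ?G = "stopped_sigma M F T \<tau>"
  let ?E = "{\<omega>'\<in>space M. Sstar S T \<tau> \<omega>' < \<eta> \<omega>'}"
  have [measurable]: "\<eta> \<in> borel_measurable ?G" "condP M ?G ?E \<in> borel_measurable ?G"
    using assms(5) by (simp_all add: condP_def)
  have subalg: "subalgebra M ?G"
    using assms(4) by (rule subalgebra_stopped_sigma)
  have [measurable]: "\<eta> \<in> borel_measurable M" "Sstar S T \<tau> \<in> borel_measurable M"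
    using measurable_from_subalg[OF subalg assms(5)] borel_measurable_Sstar_stopped[OF assms(4)] by auto
  then have E: "?E \<in> sets M" by measurable
  define B where "B = {\<omega>\<in>space M. 0 < \<eta> \<omega> \<and> condP M ?G ?E \<omega> \<le> 0}"
  have "{\<omega>\<in>space ?G. 0 < \<eta> \<omega> \<and> condP M ?G ?E \<omega> \<le> 0} \<in> sets ?G" by measurable
  then have B: "B \<in> sets ?G"
    using assms(4) by (simp add: B_def space_stopped_sigma)
  then have "B \<inter> ?E \<in> null_sets M"
    using condP_nonpos_imp_Int_null[OF finite_measure_axioms subalg E] by (auto simp: B_def)
  then have "B \<in> null_sets M"
    using stopped_sticky_not_null[OF assms(4,3,5) B] by (auto simp: B_def Int_absorb2)
  then show ?thesis
    by (rule AE_I') (auto simp: B_def)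
qed

end
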